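(* Let $1\le p<\infty$ and $n\ge 2$. Then $U(n,p) \le U(n-1,p)\cdot w(n,p)$.
   Context: Let $q = 1/p$ (with $0^q=0$). For $n\ge 1$, $U(n,p)$ denotes the maximum of $\mathrm{per}(A)=\sum_{\sigma\in S_n}\prod_{i=1}^n a_{i\sigma(i)}$ over all real $n\times n$ matrices $A$ each of whose rows has $\ell_p$-norm equal to $1$. For $k\ge1$ let $\Delta_k=\{y\in\mathbb R^k: y_i\ge 0,\ \sum_i y_i=1\}$, and define $P_k(y) = \sum_{i=1}^k y_i^q \prod_{j\ne i}(1-y_j)^q$ for $y\in\Delta_k$. Then $w(k,p)=\max_{y\in\Delta_k} P_k(y)$. *)

theory Defs
  imports "HOL-Analysis.Analysis" "HOL-Combinatorics.Permutations"
begin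

text \<open>An n x n real matrix is represented as a function A :: nat => nat => real,
  with only the entries A i j for i, j < n being relevant.\<close>

definition per :: "nat \<Rightarrow> (nat \<Rightarrow> nat \<Rightarrow> real) \<Rightarrow> real" where
  "per n A = (\<Sum>\<sigma>\<in>{\<sigma>. \<sigma> permutes {..<n}}. \<Prod>i<n. A i (\<sigma> i))"

definition row_pnorm :: "real \<Rightarrow> nat \<Rightarrow> (nat \<Rightarrow> nat \<Rightarrow> real) \<Rightarrow> nat \<Rightarrow> real" where
  "row_pnorm p n A i = (\<Sum>j<n. \<bar>A i j\<bar> powr p) powr (1 / p)"

definition U :: "nat \<Rightarrow> real \<Rightarrow> real" where
  "U n p = (SUP A\<in>{A. \<forall>i<n. row_pnorm p n A i = 1}. per n A)"

definition std_simplex :: "nat \<Rightarrow> (nat \<Rightarrow> real) set" where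
  "std_simplex k = {y. (\<forall>i<k. y i \<ge> 0) \<and> (\<Sum>i<k. y i) = 1}"

text \<open>P_k(y) with q = 1/p; note 0 powr q = 0 as required.\<close>
definition Pk :: "nat \<Rightarrow> real \<Rightarrow> (nat \<Rightarrow> real) \<Rightarrow> real" where
  "Pk k p y = (\<Sum>i<k. y i powr (1 / p) * (\<Prod>j\<in>{..<k} - {i}. (1 - y j) powr (1 / p)))"

definition w :: "nat \<Rightarrow> real \<Rightarrow> real" where
  "w k p = (SUP y\<in>std_simplex k. Pk k p y)"

end

theory Submission
  imports Defs
begin

text \<open>Expanding \<open>per A\<close> along the last column gives \<open>per A = \<Sum>\<^sub>b A\<^sub>b\<^sub>n per A\<^sub>b\<close>, where
  \<open>A\<^sub>b\<close> is \<open>A\<close> without row \<open>b\<close> and column \<open>n\<close>. Since the permanent is homogeneous in each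
  row, \<open>|per A\<^sub>b| \<le> U(n-1,p)\<close> times the product of the row norms of \<open>A\<^sub>b\<close>, and as the rows
  of \<open>A\<close> are unit vectors these norms are \<open>(1 - y\<^sub>k)\<^sup>q\<close> with \<open>y\<^sub>k = |A\<^sub>k\<^sub>n|\<^sup>p\<close>. Hence
  \<open>per A \<le> U(n-1,p) P\<^sub>n(y)\<close>, but \<open>y\<close> only lies in the cube \<open>[0,1]\<^sup>n\<close>, not in the simplex.
  Take a maximiser of \<open>P\<^sub>n\<close> on the cube. If one of its coordinates is \<open>1\<close>, then
  \<open>P\<^sub>n \<le> 1 \<le> w(n,p)\<close>. Otherwise every coordinate is an interior critical point, which
  forces \<open>y\<^sub>k P\<^sub>n(y)\<close> to equal the \<open>k\<close>-th summand of \<open>P\<^sub>n(y)\<close>; summing over \<open>k\<close> and using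
  \<open>P\<^sub>n(y) \<ge> 1\<close> gives \<open>\<Sum> y\<^sub>k = 1\<close>, so the maximiser lies in the simplex.\<close>

lemma Pk_cong: "(\<And>i. i < n \<Longrightarrow> y i = z i) \<Longrightarrow> Pk n p y = Pk n p z"
  unfolding Pk_def by (intro sum.cong refl arg_cong2[where f = "(*)"] prod.cong) auto

lemma Pk_fun_upd:
  assumes "m < n"
  shows "Pk n p (y(m := t)) = t powr (1/p) * (\<Prod>j\<in>{..<n}-{m}. (1 - y j) powr (1/p))
     + (1 - t) powr (1/p) * (\<Sum>i\<in>{..<n}-{m}. y i powr (1/p) * (\<Prod>j\<in>{..<n}-{i}-{m}. (1 - y j) powr (1/p)))"
proof -
  let ?z = "y(m := t)"
  have m: "m \<in> {..<n}" using assms by simp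
  have "Pk n p ?z = ?z m powr (1/p) * (\<Prod>j\<in>{..<n}-{m}. (1 - ?z j) powr (1/p))
     + (\<Sum>i\<in>{..<n}-{m}. ?z i powr (1/p) * (\<Prod>j\<in>{..<n}-{i}. (1 - ?z j) powr (1/p)))"
    unfolding Pk_def by (rule sum.remove[OF finite_lessThan m])
  also have "(\<Prod>j\<in>{..<n}-{m}. (1 - ?z j) powr (1/p)) = (\<Prod>j\<in>{..<n}-{m}. (1 - y j) powr (1/p))"
    by (rule prod.cong) auto
  also have "(\<Sum>i\<in>{..<n}-{m}. ?z i powr (1/p) * (\<Prod>j\<in>{..<n}-{i}. (1 - ?z j) powr (1/p)))
      = (\<Sum>i\<in>{..<n}-{m}. (1 - t) powr (1/p) * (y i powr (1/p) * (\<Prod>j\<in>{..<n}-{i}-{m}. (1 - y j) powr (1/p))))"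
  proof (rule sum.cong[OF refl])
    fix i assume i: "i \<in> {..<n}-{m}"
    have "(\<Prod>j\<in>{..<n}-{i}. (1 - ?z j) powr (1/p))
        = (1 - ?z m) powr (1/p) * (\<Prod>j\<in>{..<n}-{i}-{m}. (1 - ?z j) powr (1/p))"
      using i m by (intro prod.remove) auto
    also have "(\<Prod>j\<in>{..<n}-{i}-{m}. (1 - ?z j) powr (1/p)) = (\<Prod>j\<in>{..<n}-{i}-{m}. (1 - y j) powr (1/p))"
      by (rule prod.cong) auto
    finally show "?z i powr (1/p) * (\<Prod>j\<in>{..<n}-{i}. (1 - ?z j) powr (1/p))
        = (1 - t) powr (1/p) * (y i powr (1/p) * (\<Prod>j\<in>{..<n}-{i}-{m}. (1 - y j) powr (1/p)))"
      using i by simp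
  qed
  finally show ?thesis by (simp add: sum_distrib_left fun_upd_def)
qed

lemma Pk_le_n:
  assumes "0 \<le> p" and "\<forall>i<n. 0 \<le> y i \<and> y i \<le> 1"
  shows "Pk n p y \<le> n"
proof -
  have "Pk n p y \<le> (\<Sum>i<n. 1)"
    unfolding Pk_def using assms
    by (intro sum_mono mult_le_one powr_le1 prod_le_1 prod_nonneg conjI) auto
  then show ?thesis by simp
qed

lemma std_simplex_le_1:
  assumes "y \<in> std_simplex n" and "i < n"
  shows "0 \<le> y i \<and> y i \<le> 1"
proof -
  have "y i \<le> (\<Sum>j<n. y j)"
    using assms by (intro member_le_sum) (auto simp: std_simplex_def)
  then show ?thesis using assms by (auto simp: std_simplex_def)
qed

lemma bdd_above_Pk_std_simplex: "0 \<le> p \<Longrightarrow> bdd_above (Pk n p ` std_simplex n)"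
  by (rule bdd_aboveI[of _ "real n"]) (use Pk_le_n std_simplex_le_1 in blast)

lemma Pk_le_w: "0 \<le> p \<Longrightarrow> y \<in> std_simplex n \<Longrightarrow> Pk n p y \<le> w n p"
  unfolding w_def by (rule cSUP_upper[OF _ bdd_above_Pk_std_simplex])

lemma Pk_unit_vector: "0 < n \<Longrightarrow> Pk n p ((\<lambda>_. 0)(0 := 1)) = 1"
  by (subst Pk_fun_upd) auto

lemma unit_vector_in_std_simplex: "0 < n \<Longrightarrow> (\<lambda>_. 0)(0 := 1) \<in> std_simplex n"
  unfolding std_simplex_def by (auto simp: sum.remove[of "{..<n}" 0])

lemma one_le_w: "0 \<le> p \<Longrightarrow> 0 < n \<Longrightarrow> 1 \<le> w n p"
  using Pk_le_w[OF _ unit_vector_in_std_simplex] Pk_unit_vector by metis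

lemma powr_stationary_identity:
  fixes a q B C :: real
  assumes "q \<noteq> 0" and "0 < a" and "a < 1"
    and max: "\<And>u. 0 < u \<Longrightarrow> u < 1 \<Longrightarrow>
      u powr q * C + (1 - u) powr q * B \<le> a powr q * C + (1 - a) powr q * B"
  shows "a * (a powr q * C + (1 - a) powr q * B) = a powr q * C"
proof -
  define h where "h u = u powr q * C + (1 - u) powr q * B" for u
  have "(h has_real_derivative (q * a powr (q - 1) * C - q * (1 - a) powr (q - 1) * B)) (at a)"
    unfolding h_def using assms by (auto intro!: derivative_eq_intros)
  then have "q * a powr (q - 1) * C - q * (1 - a) powr (q - 1) * B = 0"
    by (rule DERIV_local_max[of _ _ _ "min a (1 - a)"])
      (use assms in \<open>auto simp: h_def intro!: max\<close>)
  then have stat: "a powr (q - 1) * C = (1 - a) powr (q - 1) * B"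
    using assms(1) by (simp add: algebra_simps)
  have "a * ((1 - a) powr q * B) = (1 - a) * a * ((1 - a) powr (q - 1) * B)"
    using assms by (simp add: powr_mult_base)
  also have "\<dots> = (1 - a) * (a * a powr (q - 1) * C)"
    by (simp add: stat)
  also have "\<dots> = (1 - a) * a powr q * C"
    using assms by (simp add: powr_mult_base)
  finally show ?thesis by (simp add: algebra_simps)
qed

lemma Pk_coordinate_identity_at_max:
  assumes "p \<noteq> 0" and "m < n" and "0 \<le> y m" and "y m < 1"
    and max: "\<And>u. 0 < u \<Longrightarrow> u < 1 \<Longrightarrow> Pk n p (y(m := u)) \<le> Pk n p y"
  shows "y m * Pk n p y = y m powr (1/p) * (\<Prod>j\<in>{..<n}-{m}. (1 - y j) powr (1/p))"
proof (cases "y m = 0")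
  case False
  define C where "C = (\<Prod>j\<in>{..<n}-{m}. (1 - y j) powr (1/p))"
  define B where "B = (\<Sum>i\<in>{..<n}-{m}. y i powr (1/p) * (\<Prod>j\<in>{..<n}-{i}-{m}. (1 - y j) powr (1/p)))"
  have upd: "Pk n p (y(m := u)) = u powr (1/p) * C + (1 - u) powr (1/p) * B" for u
    unfolding B_def C_def by (rule Pk_fun_upd[OF \<open>m < n\<close>])
  have "Pk n p y = Pk n p (y(m := y m))" by simp
  also have "\<dots> = y m powr (1/p) * C + (1 - y m) powr (1/p) * B" by (rule upd)
  finally have y: "Pk n p y = y m powr (1/p) * C + (1 - y m) powr (1/p) * B" .
  have "y m * (y m powr (1/p) * C + (1 - y m) powr (1/p) * B) = y m powr (1/p) * C"
    by (rule powr_stationary_identity) (use assms False max[unfolded upd y] in auto)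
  then show ?thesis unfolding y C_def .
qed simp

lemma Pk_attains_max_on_cube:
  assumes "0 < p"
  obtains y where "\<forall>i. 0 \<le> y i \<and> y i \<le> 1"
    and "\<And>z. \<forall>i<n. 0 \<le> z i \<and> z i \<le> 1 \<Longrightarrow> Pk n p z \<le> Pk n p y"
proof -
  define S where "S i = (if i < n then {0..1::real} else {0})" for i
  define K where "K = PiE UNIV S"
  have K: "z \<in> K \<longleftrightarrow> (\<forall>i. if i < n then 0 \<le> z i \<and> z i \<le> 1 else z i = 0)" for z
    by (auto simp: K_def S_def PiE_iff)
  have "compact K"
    unfolding K_def using compactin_PiE[of "\<lambda>_. euclidean" UNIV S]
    by (simp add: euclidean_product_topology S_def)
  have K01: "0 \<le> z i \<and> z i \<le> 1" if "z \<in> K" for z i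
    using that unfolding K by (metis order_refl zero_le_one)
  have coord: "continuous_on K (\<lambda>z. z i)" for i
    by (rule continuous_on_subset[OF continuous_on_product_coordinates]) simp
  have "continuous_on K (Pk n p)"
    unfolding Pk_def using assms K01
    by (intro continuous_on_sum continuous_on_mult continuous_on_prod continuous_on_powr'
        continuous_on_diff coord continuous_on_const) auto
  moreover have "(\<lambda>_. 0) \<in> K" unfolding K by auto
  ultimately obtain y where y: "y \<in> K" "\<forall>z\<in>K. Pk n p z \<le> Pk n p y"
    using continuous_attains_sup[OF \<open>compact K\<close>] by blast
  show thesis
  proof (rule that)
    show "\<forall>i. 0 \<le> y i \<and> y i \<le> 1" using K01[OF y(1)] by blast
    fix z :: "nat \<Rightarrow> real" assume "\<forall>i<n. 0 \<le> z i \<and> z i \<le> 1"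
    then have "(\<lambda>i. if i < n then z i else 0) \<in> K" unfolding K by auto
    then show "Pk n p z \<le> Pk n p y"
      using y(2) Pk_cong[of n z "\<lambda>i. if i < n then z i else 0" p] by fastforce
  qed
qed

lemma Pk_le_w_on_cube:
  assumes "0 < p" and "0 < n" and "\<forall>i<n. 0 \<le> y i \<and> y i \<le> 1"
  shows "Pk n p y \<le> w n p"
proof -
  obtain ys where ys01: "\<forall>i. 0 \<le> ys i \<and> ys i \<le> 1"
    and max: "\<And>z. \<forall>i<n. 0 \<le> z i \<and> z i \<le> 1 \<Longrightarrow> Pk n p z \<le> Pk n p ys"
    using Pk_attains_max_on_cube[OF \<open>0 < p\<close>] by blast
  have "Pk n p y \<le> Pk n p ys" using max assms by simp
  also have "Pk n p ys \<le> w n p"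
  proof (cases "\<exists>k<n. ys k = 1")
    case True
    then obtain k where k: "k < n" "ys k = 1" by blast
    have "Pk n p ys = Pk n p (ys(k := 1))" using k by (simp add: fun_upd_idem)
    also have "\<dots> = (\<Prod>j\<in>{..<n}-{k}. (1 - ys j) powr (1/p))"
      using Pk_fun_upd[OF k(1)] by simp
    also have "\<dots> \<le> 1" using ys01 assms by (intro prod_le_1 conjI powr_le1) auto
    also have "\<dots> \<le> w n p" using one_le_w assms by simp
    finally show ?thesis .
  next
    case False
    have stationary: "ys m * Pk n p ys = ys m powr (1/p) * (\<Prod>j\<in>{..<n}-{m}. (1 - ys j) powr (1/p))"
      if "m < n" for m
      using that False ys01 assms
      by (intro Pk_coordinate_identity_at_max max) (auto simp: order_less_le)
    have "Pk n p ys * (\<Sum>m<n. ys m) = (\<Sum>m<n. ys m * Pk n p ys)"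
      by (simp add: sum_distrib_left mult.commute)
    also have "\<dots> = Pk n p ys"
      unfolding Pk_def[of n p ys] by (rule sum.cong) (simp_all add: stationary[unfolded Pk_def])
    finally have "Pk n p ys * (\<Sum>m<n. ys m) = Pk n p ys" .
    moreover have "1 \<le> Pk n p ys"
      using max[of "(\<lambda>_. 0)(0 := 1)"] Pk_unit_vector[OF \<open>0 < n\<close>] by simp
    ultimately have "ys \<in> std_simplex n" using ys01 by (simp add: std_simplex_def)
    then show ?thesis using assms by (simp add: Pk_le_w)
  qed
  finally show ?thesis .
qed

lemma per_cong: "(\<And>i j. i < n \<Longrightarrow> j < n \<Longrightarrow> A i j = B i j) \<Longrightarrow> per n A = per n B"
  unfolding per_def by (intro sum.cong prod.cong refl) (auto dest: permutes_in_image)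

lemma per_scale_rows: "per n (\<lambda>i j. c i * A i j) = (\<Prod>i<n. c i) * per n A"
  unfolding per_def by (simp add: prod.distrib sum_distrib_left)

lemma per_by_columns: "per n A = (\<Sum>\<sigma>\<in>{\<sigma>. \<sigma> permutes {..<n}}. \<Prod>i<n. A (\<sigma> i) i)"
proof -
  have "(\<Sum>\<sigma>\<in>{\<sigma>. \<sigma> permutes {..<n}}. \<Prod>i<n. A (\<sigma> i) i)
      = (\<Sum>\<sigma>\<in>{\<sigma>. \<sigma> permutes {..<n}}. \<Prod>i<n. A i (inv \<sigma> i))"
    by (intro sum.cong refl prod.permutes_inv) simp
  also have "\<dots> = per n A"
    unfolding per_def by (rule sum_permutations_inverse[symmetric])
  finally show ?thesis by simp
qed

text \<open>The minor of the entry \<open>(b, m)\<close> appears with row \<open>m\<close> moved to the place of row \<open>b\<close>;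
  the order of the rows does not affect the permanent.\<close>

lemma per_expand_last_column:
  "per (Suc m) A = (\<Sum>b<Suc m. A b m * per m (\<lambda>l j. A (Transposition.transpose m b l) j))"
proof -
  let ?t = "Transposition.transpose m"
  have fin: "finite {..<m}" and nin: "m \<notin> {..<m}" by auto
  have "per (Suc m) A = (\<Sum>\<sigma>\<in>{\<sigma>. \<sigma> permutes insert m {..<m}}. \<Prod>i\<in>insert m {..<m}. A (\<sigma> i) i)"
    unfolding per_by_columns lessThan_Suc ..
  also have "\<dots> = (\<Sum>b\<in>insert m {..<m}. \<Sum>\<tau>\<in>{\<tau>. \<tau> permutes {..<m}}.
         \<Prod>i\<in>insert m {..<m}. A ((?t b \<circ> \<tau>) i) i)"
    by (rule sum_over_permutations_insert[OF fin nin])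
  also have "\<dots> = (\<Sum>b\<in>insert m {..<m}. \<Sum>\<tau>\<in>{\<tau>. \<tau> permutes {..<m}}.
         A b m * (\<Prod>i<m. A (?t b (\<tau> i)) i))"
    using fin nin by (intro sum.cong refl) (simp add: permutes_not_in)
  also have "\<dots> = (\<Sum>b\<in>insert m {..<m}. A b m * per m (\<lambda>l j. A (?t b l) j))"
    unfolding per_by_columns[of m] by (simp add: sum_distrib_left)
  finally show ?thesis unfolding lessThan_Suc .
qed

lemma row_pnorm_nonneg: "0 \<le> row_pnorm p m A i"
  unfolding row_pnorm_def by simp

lemma row_pnorm_eq_1_iff:
  assumes "p \<noteq> 0"
  shows "row_pnorm p m A i = 1 \<longleftrightarrow> (\<Sum>j<m. \<bar>A i j\<bar> powr p) = 1"
proof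
  let ?S = "\<Sum>j<m. \<bar>A i j\<bar> powr p"
  assume "row_pnorm p m A i = 1"
  then have "(?S powr (1/p)) powr p = 1" unfolding row_pnorm_def by simp
  then show "?S = 1" using assms by (simp add: powr_powr sum_nonneg)
qed (simp add: row_pnorm_def)

lemma row_pnorm_scale:
  assumes "0 < p"
  shows "row_pnorm p m (\<lambda>i j. c i * A i j) i = \<bar>c i\<bar> * row_pnorm p m A i"
proof -
  have "(\<Sum>j<m. \<bar>c i * A i j\<bar> powr p) = \<bar>c i\<bar> powr p * (\<Sum>j<m. \<bar>A i j\<bar> powr p)"
    by (simp add: abs_mult powr_mult sum_distrib_left)
  then show ?thesis
    using assms unfolding row_pnorm_def by (simp add: powr_mult powr_powr sum_nonneg)
qed

lemma row_pnorm_eq_0D: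
  assumes "0 < p" and "row_pnorm p m A i = 0" and "j < m"
  shows "A i j = 0"
proof -
  have "(\<Sum>j<m. \<bar>A i j\<bar> powr p) = 0" using assms(2) unfolding row_pnorm_def by simp
  then have "\<bar>A i j\<bar> powr p = 0" using assms(3) by (simp add: sum_nonneg_eq_0_iff)
  then show ?thesis by simp
qed

lemma abs_entry_le_1:
  assumes "0 < p" and "row_pnorm p m A i = 1" and "j < m"
  shows "\<bar>A i j\<bar> \<le> 1"
proof -
  have "\<bar>A i j\<bar> powr p \<le> (\<Sum>j<m. \<bar>A i j\<bar> powr p)"
    using assms(3) by (intro member_le_sum) auto
  then have "\<bar>A i j\<bar> powr p \<le> 1" using assms row_pnorm_eq_1_iff by simp
  then have "(\<bar>A i j\<bar> powr p) powr (1/p) \<le> 1 powr (1/p)"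
    using assms(1) by (intro powr_mono2) auto
  then show ?thesis using assms(1) by (simp add: powr_powr)
qed

lemma per_le_fact:
  assumes "0 < p" and "\<forall>i<m. row_pnorm p m A i = 1"
  shows "per m A \<le> fact m"
proof -
  have "per m A \<le> (\<Sum>\<sigma>\<in>{\<sigma>. \<sigma> permutes {..<m}}. 1)"
    unfolding per_def
  proof (rule sum_mono)
    fix \<sigma> assume "\<sigma> \<in> {\<sigma>. \<sigma> permutes {..<m}}"
    then have "\<bar>\<Prod>i<m. A i (\<sigma> i)\<bar> \<le> 1"
      unfolding abs_prod using assms
      by (intro prod_le_1 conjI abs_entry_le_1) (auto dest: permutes_in_image)
    then show "(\<Prod>i<m. A i (\<sigma> i)) \<le> 1" by simp
  qed
  also have "\<dots> = fact m" using card_permutations[of "{..<m}" m] by simp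
  finally show ?thesis .
qed

lemma per_le_U:
  assumes "0 < p" and "\<forall>i<m. row_pnorm p m A i = 1"
  shows "per m A \<le> U m p"
proof -
  have "bdd_above (per m ` {A. \<forall>i<m. row_pnorm p m A i = 1})"
    using per_le_fact[OF \<open>0 < p\<close>] by (intro bdd_aboveI[of _ "fact m"]) blast
  then show ?thesis unfolding U_def by (rule cSUP_upper[rotated]) (use assms in simp)
qed

lemma abs_per_le_U:
  assumes "0 < p" and "0 < m" and unit: "\<forall>i<m. row_pnorm p m A i = 1"
  shows "\<bar>per m A\<bar> \<le> U m p"
proof -
  define c where "c i = (if i = 0 then -1 else 1 :: real)" for i :: nat
  have "(\<Prod>i<m. c i) = c 0 * (\<Prod>i\<in>{..<m}-{0}. c i)"
    using assms(2) by (intro prod.remove) auto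
  then have "(\<Prod>i<m. c i) = -1" by (simp add: c_def)
  then have "- per m A = per m (\<lambda>i j. c i * A i j)" by (simp add: per_scale_rows)
  also have "\<dots> \<le> U m p"
  proof (intro per_le_U allI impI)
    fix i assume "i < m"
    have "\<bar>c i\<bar> = 1" by (simp add: c_def)
    then show "row_pnorm p m (\<lambda>i j. c i * A i j) i = 1"
      using assms \<open>i < m\<close> by (simp add: row_pnorm_scale)
  qed fact
  finally show ?thesis using per_le_U[OF assms(1) unit] by simp
qed

lemma ex_unit_rows: "0 < m \<Longrightarrow> \<exists>A. \<forall>i<m. row_pnorm p m A i = 1"
proof (intro exI allI impI)
  fix i assume "0 < m"
  have "(\<Sum>j<m. \<bar>if j = 0 then 1 else 0 :: real\<bar> powr p) = (\<Sum>j<m. if j = 0 then 1 else 0)"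
    by (intro sum.cong) auto
  also have "\<dots> = 1" using \<open>0 < m\<close> by simp
  finally show "row_pnorm p m (\<lambda>_ j. if j = 0 then 1 else 0) i = 1"
    unfolding row_pnorm_def by simp
qed

lemma U_nonneg: "0 < p \<Longrightarrow> 0 < m \<Longrightarrow> 0 \<le> U m p"
  using ex_unit_rows abs_per_le_U by (meson abs_ge_zero order_trans)

lemma unit_rows_factorization:
  assumes "0 < p" and "0 < m"
  obtains E where "\<forall>i<m. row_pnorm p m E i = 1"
    and "\<And>i j. i < m \<Longrightarrow> j < m \<Longrightarrow> D i j = row_pnorm p m D i * E i j"
proof -
  let ?r = "row_pnorm p m D"
  obtain E0 where E0: "\<forall>i<m. row_pnorm p m E0 i = 1" using ex_unit_rows[OF assms(2)] by blast
  define E where "E i j = (if ?r i = 0 then E0 i j else D i j / ?r i)" for i j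
  show thesis
  proof (rule that[of E])
    show "\<forall>i<m. row_pnorm p m E i = 1"
    proof (intro allI impI)
      fix i assume "i < m"
      show "row_pnorm p m E i = 1"
      proof (cases "?r i = 0")
        case True
        then show ?thesis using E0 \<open>i < m\<close> by (simp add: E_def row_pnorm_def)
      next
        case False
        then have "row_pnorm p m E i = row_pnorm p m (\<lambda>i j. (1 / ?r i) * D i j) i"
          by (simp add: E_def row_pnorm_def)
        also have "\<dots> = 1"
          using assms(1) False row_pnorm_nonneg[of p m D i] row_pnorm_scale[of p m "\<lambda>i. 1 / ?r i" D i]
          by simp
        finally show ?thesis .
      qed
    qed
    show "D i j = ?r i * E i j" if "i < m" "j < m" for i j
      using row_pnorm_eq_0D[OF assms(1) _ that(2)] by (simp add: E_def)
  qed
qed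

lemma abs_per_le_U_mult_row_pnorms:
  assumes "0 < p" and "0 < m"
  shows "\<bar>per m D\<bar> \<le> U m p * (\<Prod>i<m. row_pnorm p m D i)"
proof -
  obtain E where unit: "\<forall>i<m. row_pnorm p m E i = 1"
    and D: "\<And>i j. i < m \<Longrightarrow> j < m \<Longrightarrow> D i j = row_pnorm p m D i * E i j"
    using unit_rows_factorization[OF assms] by blast
  have "per m D = (\<Prod>i<m. row_pnorm p m D i) * per m E"
    by (subst per_cong[OF D]) (simp_all add: per_scale_rows)
  then have "\<bar>per m D\<bar> = (\<Prod>i<m. row_pnorm p m D i) * \<bar>per m E\<bar>"
    by (simp add: abs_mult abs_prod row_pnorm_nonneg)
  also have "\<dots> \<le> (\<Prod>i<m. row_pnorm p m D i) * U m p"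
    using assms unit by (intro mult_left_mono abs_per_le_U prod_nonneg row_pnorm_nonneg)
  finally show ?thesis by (simp add: mult.commute)
qed

lemma row_pnorm_drop_last_column:
  assumes "p \<noteq> 0" and "row_pnorm p (Suc m) A k = 1"
  shows "row_pnorm p m A k = (1 - \<bar>A k m\<bar> powr p) powr (1/p)"
proof -
  have "(\<Sum>j<m. \<bar>A k j\<bar> powr p) + \<bar>A k m\<bar> powr p = 1"
    using assms row_pnorm_eq_1_iff by simp
  then have "(\<Sum>j<m. \<bar>A k j\<bar> powr p) = 1 - \<bar>A k m\<bar> powr p" by simp
  then show ?thesis unfolding row_pnorm_def by simp
qed

lemma prod_transpose_last:
  assumes "b < Suc m"
  shows "(\<Prod>l<m. f (Transposition.transpose m b l)) = (\<Prod>k\<in>{..<Suc m}-{b}. f k)"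
proof -
  have "Transposition.transpose m b permutes {..<Suc m}"
    using assms by (intro permutes_swap_id) auto
  then have "bij_betw (Transposition.transpose m b) ({..<Suc m} - {m}) ({..<Suc m} - {b})"
    using assms by (intro bij_betw_DiffI permutes_imp_bij) (auto simp: bij_betw_def)
  moreover have "{..<Suc m} - {m} = {..<m}" by auto
  ultimately show ?thesis by (simp add: prod.reindex_bij_betw)
qed

lemma per_le_U_mult_Pk:
  assumes "0 < p" and "0 < m" and unit: "\<forall>k<Suc m. row_pnorm p (Suc m) A k = 1"
  shows "per (Suc m) A \<le> U m p * Pk (Suc m) p (\<lambda>k. \<bar>A k m\<bar> powr p)"
proof -
  let ?t = "Transposition.transpose m"
  let ?y = "\<lambda>k. \<bar>A k m\<bar> powr p"
  have minor: "(\<Prod>l<m. row_pnorm p m (\<lambda>l. A (?t b l)) l) = (\<Prod>k\<in>{..<Suc m}-{b}. (1 - ?y k) powr (1/p))"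
    if "b < Suc m" for b
  proof -
    have "(\<Prod>l<m. row_pnorm p m (\<lambda>l. A (?t b l)) l) = (\<Prod>k\<in>{..<Suc m}-{b}. row_pnorm p m A k)"
      using prod_transpose_last[OF that, of "row_pnorm p m A"] by (simp add: row_pnorm_def)
    also have "\<dots> = (\<Prod>k\<in>{..<Suc m}-{b}. (1 - ?y k) powr (1/p))"
      using assms by (intro prod.cong refl row_pnorm_drop_last_column) auto
    finally show ?thesis .
  qed
  have "per (Suc m) A = (\<Sum>b<Suc m. A b m * per m (\<lambda>l. A (?t b l)))"
    by (rule per_expand_last_column)
  also have "\<dots> \<le> (\<Sum>b<Suc m. \<bar>A b m\<bar> * \<bar>per m (\<lambda>l. A (?t b l))\<bar>)"
    by (intro sum_mono) (metis abs_ge_self abs_mult)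
  also have "\<dots> \<le> (\<Sum>b<Suc m. \<bar>A b m\<bar> * (U m p * (\<Prod>l<m. row_pnorm p m (\<lambda>l. A (?t b l)) l)))"
    using assms by (intro sum_mono mult_left_mono abs_per_le_U_mult_row_pnorms) auto
  also have "\<dots> = U m p * (\<Sum>b<Suc m. ?y b powr (1/p) * (\<Prod>k\<in>{..<Suc m}-{b}. (1 - ?y k) powr (1/p)))"
    unfolding sum_distrib_left using assms by (intro sum.cong refl) (simp add: minor powr_powr)
  also have "\<dots> = U m p * Pk (Suc m) p ?y" unfolding Pk_def ..
  finally show ?thesis .
qed

theorem mainTheorem6:
  fixes n :: nat and p :: real
  assumes "1 \<le> p" and "2 \<le> n"
  shows "U n p \<le> U (n - 1) p * w n p"
proof -
  obtain m where n: "n = Suc m" and "0 < m" using assms(2) by (cases n) auto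
  have "0 < p" using assms(1) by simp
  have "per n A \<le> U m p * w n p" if unit: "\<forall>i<n. row_pnorm p n A i = 1" for A
  proof -
    have "\<forall>k<n. 0 \<le> \<bar>A k m\<bar> powr p \<and> \<bar>A k m\<bar> powr p \<le> 1"
      using abs_entry_le_1[of p n A _ m] unit \<open>0 < p\<close> n by (auto intro: powr_le1)
    then have "Pk n p (\<lambda>k. \<bar>A k m\<bar> powr p) \<le> w n p"
      using \<open>0 < p\<close> n by (intro Pk_le_w_on_cube) auto
    moreover have "per n A \<le> U m p * Pk n p (\<lambda>k. \<bar>A k m\<bar> powr p)"
      using per_le_U_mult_Pk[OF \<open>0 < p\<close> \<open>0 < m\<close>] unit n by simp
    ultimately show ?thesis
      using U_nonneg[OF \<open>0 < p\<close> \<open>0 < m\<close>] by (meson mult_left_mono order.trans)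
  qed
  moreover have "{A. \<forall>i<n. row_pnorm p n A i = 1} \<noteq> {}" using ex_unit_rows n by auto
  ultimately have "U n p \<le> U m p * w n p" unfolding U_def by (intro cSUP_least) auto
  then show ?thesis using n by simp
qed

end
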